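(* Let $N\ge1$, $s>0$, $p\in[1,\infty)$, $q\in[1,\infty)$. Then there exists $f\in L^p(\mathbb{R}^N)$ satisfying \[\sup_{0<r<s}(s-r)^{1/q}\|f\|_{\mathbf{B}^r_{p,q}(\mathbb{R}^N)}<\infty\] but $f\notin B^s_{p,\infty}(\mathbb{R}^N)$.
   Context: Subatomic (quarkonial) norm: fix a nonnegative $\psi\in C^\infty_c(\mathbb{R}^N)$ with $\mathrm{supp}\,\psi\subset B_{2^{r_0}}$ for some $r_0\ge0$ and $\sum_{k\in\mathbb{Z}^N}\psi(x-k)=1$ for all $x$, and fix $\varrho>r_0$. For $\beta\in\mathbb{N}^N$ let $\psi^\beta(x)=x^\beta\psi(x)$. For $r>0$, $p\in[1,\infty]$, $\nu\in\mathbb{N}$, $m\in\mathbb{Z}^N$, the $(r,p)$-$\beta$-quark is $(\beta\mathrm{qu})_{\nu,m}(x)=2^{-\nu(r-N/p)}\psi^\beta(2^\nu x-m)$. For coefficients $\lambda=(\lambda^\beta_{\nu,m})$ set $\|\lambda\|_{\varrho,p,q}=\sup_\beta 2^{\varrho|\beta|}\big(\sum_{\nu\ge0}(\sum_m|\lambda^\beta_{\nu,m}|^p)^{q/p}\big)^{1/q}$. Then $\|f\|_{\mathbf{B}^r_{p,q}}$ is the infimum of $\|\lambda\|_{\varrho,p,q}$ over all representations $f=\sum_\beta\sum_{\nu\ge0}\sum_m\lambda^\beta_{\nu,m}(\beta\mathrm{qu})_{\nu,m}$ in $\mathscr{S}'(\mathbb{R}^N)$ (using $(r,p)$-quarks).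 $B^s_{p,\infty}(\mathbb{R}^N)$ is the set of $f\in L^p$ with $\sup_{h\ne0}|h|^{-s}\|\Delta^M_hf\|_{L^p}<\infty$ for an integer $M>s$, where $\Delta_h^Mf(x)=\sum_{j=0}^M(-1)^{M-j}\binom Mj f(x+jh)$. *)

theory Defs
  imports "HOL-Analysis.Analysis"
begin

definition pdiff :: "'n::finite \<Rightarrow> (real^'n \<Rightarrow> real) \<Rightarrow> (real^'n \<Rightarrow> real)" where
  "pdiff i g = (\<lambda>x. frechet_derivative g (at x) (axis i 1))"

fun pdiffs :: "'n::finite list \<Rightarrow> (real^'n \<Rightarrow> real) \<Rightarrow> (real^'n \<Rightarrow> real)" where
  "pdiffs [] g = g"
| "pdiffs (i # is) g = pdiff i (pdiffs is g)"

definition smooth_fun :: "(real^'n::finite \<Rightarrow> real) \<Rightarrow> bool" where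
  "smooth_fun g \<longleftrightarrow> (\<forall>is x. pdiffs is g differentiable (at x))"

definition schwartz :: "(real^'n::finite \<Rightarrow> real) \<Rightarrow> bool" where
  "schwartz \<phi> \<longleftrightarrow> smooth_fun \<phi> \<and>
     (\<forall>is (k::nat). bounded (range (\<lambda>x. (1 + norm x) ^ k * pdiffs is \<phi> x)))"

definition int_vec :: "('n::finite \<Rightarrow> int) \<Rightarrow> real^'n" where
  "int_vec m = (\<chi> i. real_of_int (m i))"

definition admissible_psi :: "(real^'n::finite \<Rightarrow> real) \<Rightarrow> real \<Rightarrow> bool" where
  "admissible_psi \<psi> r0 \<longleftrightarrow> r0 \<ge> 0 \<and> smooth_fun \<psi> \<and> (\<forall>x. \<psi> x \<ge> 0) \<and>
     closure {x. \<psi> x \<noteq> 0} \<subseteq> ball 0 (2 powr r0) \<and>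
     (\<forall>x. ((\<lambda>k. \<psi> (x - int_vec k)) has_sum 1) UNIV)"

definition mpow :: "('n::finite \<Rightarrow> nat) \<Rightarrow> real^'n \<Rightarrow> real" where
  "mpow \<beta> x = (\<Prod>i\<in>UNIV. (x $ i) ^ (\<beta> i))"

definition mabs :: "('n::finite \<Rightarrow> nat) \<Rightarrow> nat" where
  "mabs \<beta> = (\<Sum>i\<in>UNIV. \<beta> i)"

definition quark :: "(real^'n::finite \<Rightarrow> real) \<Rightarrow> real \<Rightarrow> real \<Rightarrow> ('n \<Rightarrow> nat) \<Rightarrow> nat \<Rightarrow> ('n \<Rightarrow> int)
    \<Rightarrow> real^'n \<Rightarrow> real" where
  "quark \<psi> r p \<beta> \<nu> m x =
     2 powr (- real \<nu> * (r - real CARD('n) / p)) *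
     (let y = (2 ^ \<nu>) *\<^sub>R x - int_vec m in mpow \<beta> y * \<psi> y)"

definition ennpow :: "ennreal \<Rightarrow> real \<Rightarrow> ennreal" where
  "ennpow x a = (if x = \<infinity> then \<infinity> else ennreal (enn2real x powr a))"

definition coef_norm :: "real \<Rightarrow> real \<Rightarrow> real \<Rightarrow> (('n::finite \<Rightarrow> nat) \<Rightarrow> nat \<Rightarrow> ('n \<Rightarrow> int) \<Rightarrow> real) \<Rightarrow> ennreal" where
  "coef_norm \<rho> p q c =
     (SUP \<beta>. ennreal (2 powr (\<rho> * real (mabs \<beta>))) *
        ennpow (nn_integral (count_space UNIV)
          (\<lambda>\<nu>. ennpow (ennpow (nn_integral (count_space UNIV)
                  (\<lambda>m. ennreal (\<bar>c \<beta> \<nu> m\<bar> powr p))) (1/p)) q)) (1/q))"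

text \<open>f = sum of lambda times quarks in S': tested against every Schwartz function,
  the (absolutely convergent) series of pairings sums to the pairing with f.\<close>
definition quark_repr :: "(real^'n::finite \<Rightarrow> real) \<Rightarrow> real \<Rightarrow> real \<Rightarrow> (real^'n \<Rightarrow> real)
    \<Rightarrow> (('n \<Rightarrow> nat) \<Rightarrow> nat \<Rightarrow> ('n \<Rightarrow> int) \<Rightarrow> real) \<Rightarrow> bool" where
  "quark_repr \<psi> r p f c \<longleftrightarrow>
     (\<forall>\<phi>. schwartz \<phi> \<longrightarrow>
        ((\<lambda>(\<beta>, \<nu>, m). c \<beta> \<nu> m * integral\<^sup>L lborel (\<lambda>x. quark \<psi> r p \<beta> \<nu> m x * \<phi> x))
          has_sum integral\<^sup>L lborel (\<lambda>x. f x * \<phi> x)) UNIV)"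

definition quark_besov_norm :: "(real^'n::finite \<Rightarrow> real) \<Rightarrow> real \<Rightarrow> real \<Rightarrow> real \<Rightarrow> real
    \<Rightarrow> (real^'n \<Rightarrow> real) \<Rightarrow> ennreal" where
  "quark_besov_norm \<psi> \<rho> r p q f = (INF c\<in>{c. quark_repr \<psi> r p f c}. coef_norm \<rho> p q c)"

definition in_Lp :: "real \<Rightarrow> (real^'n::finite \<Rightarrow> real) \<Rightarrow> bool" where
  "in_Lp p f \<longleftrightarrow> f \<in> borel_measurable lborel \<and> integrable lborel (\<lambda>x. \<bar>f x\<bar> powr p)"

definition Lp_norm :: "real \<Rightarrow> (real^'n::finite \<Rightarrow> real) \<Rightarrow> real" where
  "Lp_norm p f = (integral\<^sup>L lborel (\<lambda>x. \<bar>f x\<bar> powr p)) powr (1/p)"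

definition fdiff :: "nat \<Rightarrow> real^'n::finite \<Rightarrow> (real^'n \<Rightarrow> real) \<Rightarrow> (real^'n \<Rightarrow> real)" where
  "fdiff M h f = (\<lambda>x. \<Sum>j\<le>M. (-1) ^ (M - j) * real (M choose j) * f (x + real j *\<^sub>R h))"

definition besov_inf :: "real \<Rightarrow> real \<Rightarrow> (real^'n::finite \<Rightarrow> real) \<Rightarrow> bool" where
  "besov_inf s p f \<longleftrightarrow> in_Lp p f \<and>
     (\<exists>M::nat. real M > s \<and>
        bdd_above ((\<lambda>h. norm h powr (-s) * Lp_norm p (fdiff M h f)) ` (UNIV - {0})))"

end

theory Submission
  imports Defs "HOL-Real_Asymp.Real_Asymp"
begin

text \<open>
  The function is a lacunary sum of widely separated bumps
  \<open>f(x) = \<Sum>\<nu>. \<lambda>\<^sub>\<nu> 2^(-\<nu>(s - N/p)) \<psi>(2^\<nu>(x - z\<^sub>\<nu>))\<close>, where \<open>\<lambda>\<^sub>\<nu> = \<nu>^(1/q)\<close> if \<open>\<nu>\<close> is a power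
  of two and \<open>\<lambda>\<^sub>\<nu> = 0\<close> otherwise. Each bump is a single \<open>(r,p)\<close>-quark of level \<open>\<nu>\<close> with coefficient
  \<open>\<lambda>\<^sub>\<nu> 2^(-\<nu>(s - r))\<close>, so with \<open>Y = 2^(-(s - r)q)\<close> the \<open>q\<close>-th power of the quark norm is at most
  \<open>\<Sum>\<^sub>j 2^j Y^(2^j) \<le> 3/(1 - Y) = O(1/(s - r))\<close>. Lacunarity is essential here: all levels would
  give \<open>\<Sum>\<^sub>\<nu> \<nu> Y^\<nu> \<sim> (s - r)^(-2)\<close>.
  On the other hand, on the support of the \<open>\<nu>\<close>-th bump the difference \<open>\<Delta>\<^sup>M\<^sub>h f\<close> with step
  \<open>|h| = 2 radius 2^(-\<nu>)\<close> along a coordinate axis only sees that bump, so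
  \<open>|h|^(-s) \<parallel>\<Delta>\<^sup>M\<^sub>h f\<parallel>\<^sub>p \<ge> c \<lambda>\<^sub>\<nu>\<close>, which is unbounded.
\<close>

lemma summable_powr_mult_exp:
  fixes b c :: real
  assumes "c > 0"
  shows "summable (\<lambda>i. real i powr b * 2 powr (-c * real i))"
proof (rule summable_comparison_test_bigo)
  have "summable (\<lambda>i. (2 powr (-(c/2))) ^ i)"
    using assms by (simp add: powr_less_one)
  then show "summable (\<lambda>i. norm (2 powr (-(c/2) * real i)))"
    by (simp add: powr_realpow[symmetric] powr_powr mult.commute)
  show "(\<lambda>i. real i powr b * 2 powr (-c * real i)) \<in> O(\<lambda>i. 2 powr (-(c/2) * real i))"
    using assms by real_asymp
qed

text \<open>Each term \<open>2^j y^(2^j)\<close> with \<open>j \<ge> 1\<close> is at most twice the geometric block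
  \<open>\<Sum>n\<in>{2^(j-1)..<2^j}. y^n\<close>.\<close>
lemma sum_lacunary_le_geometric:
  fixes y :: real
  assumes "0 \<le> y" "y \<le> 1"
  shows "(\<Sum>j<Suc J. 2^j * y^(2^j)) \<le> y + 2 * (\<Sum>n<2^J. y^n)"
proof (induction J)
  case 0
  then show ?case by simp
next
  case (Suc J)
  have "real (card {(2::nat)^J..<2^Suc J}) * y^(2^Suc J) \<le> (\<Sum>n\<in>{2^J..<2^Suc J}. y^n)"
    by (rule sum_bounded_below) (use assms in \<open>auto intro: power_decreasing\<close>)
  then have block: "2^J * y^(2^Suc J) \<le> (\<Sum>n\<in>{2^J..<2^Suc J}. y^n)"
    by simp
  have split: "(\<Sum>n<2^Suc J. y^n) = (\<Sum>n<2^J. y^n) + (\<Sum>n\<in>{2^J..<2^Suc J}. y^n)"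
  proof -
    have "(\<Sum>n\<in>{0..<2^J}. y^n) + (\<Sum>n\<in>{2^J..<2^Suc J}. y^n) = (\<Sum>n\<in>{0..<2^Suc J}. y^n)"
      by (rule sum.atLeastLessThan_concat) auto
    then show ?thesis
      by (simp add: atLeast0LessThan)
  qed
  have "(\<Sum>j<Suc (Suc J). 2^j * y^(2^j)) = (\<Sum>j<Suc J. 2^j * y^(2^j)) + 2 * (2^J * y^(2^Suc J))"
    by simp
  also have "\<dots> \<le> y + 2 * (\<Sum>n<2^J. y^n) + 2 * (\<Sum>n\<in>{2^J..<2^Suc J}. y^n)"
    using Suc.IH block by linarith
  also have "\<dots> = y + 2 * (\<Sum>n<2^Suc J. y^n)"
    unfolding split by (simp add: algebra_simps)
  finally show ?case .
qed

lemma sum_lacunary_le: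
  fixes y :: real
  assumes "0 \<le> y" "y < 1"
  shows "(\<Sum>j<n. 2^j * y^(2^j)) \<le> 3 / (1 - y)"
proof -
  have geometric: "(\<Sum>k<m. y^k) \<le> 1 / (1 - y)" for m
    using assms by (simp add: sum_gp_strict divide_right_mono)
  have "y \<le> 1 / (1 - y)"
    using assms mult_le_one[of y "1 - y"] by (simp add: le_divide_eq)
  have "(\<Sum>j<n. 2^j * y^(2^j)) \<le> (\<Sum>j<Suc n. 2^j * y^(2^j))"
    using assms by simp
  also have "\<dots> \<le> y + 2 * (\<Sum>k<2^n. y^k)"
    using assms by (intro sum_lacunary_le_geometric) auto
  also have "\<dots> \<le> 1 / (1 - y) + 2 * (1 / (1 - y))"
    using \<open>y \<le> 1 / (1 - y)\<close> geometric[of "2^n"] by linarith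
  finally show ?thesis by simp
qed

lemma divide_one_minus_exp2_le:
  fixes e :: real
  assumes "e > 0"
  shows "e / (1 - 2 powr (-e)) \<le> (1 + e * ln 2) / ln 2"
proof -
  define x where "x = 2 powr e"
  have x: "1 + e * ln 2 \<le> x"
    using exp_ge_add_one_self[of "e * ln 2"] by (simp add: x_def powr_def mult.commute)
  moreover have "e * ln 2 > 0"
    using assms by simp
  ultimately have "x > 1"
    by linarith
  then have "e / (1 - 2 powr (-e)) = e * x / (x - 1)"
    by (simp add: x_def powr_minus field_simps)
  also have "\<dots> \<le> (1 + e * ln 2) / ln 2"
    using x \<open>x > 1\<close> assms by (simp add: field_simps)
  finally show ?thesis .
qed

lemma abs_alternating_binomial_sum_powr_le:
  fixes u :: "nat \<Rightarrow> real"
  assumes "p > 0"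
  shows "\<bar>\<Sum>j\<le>M. (-1) ^ (M - j) * real (M choose j) * u j\<bar> powr p
           \<le> (2^M) powr p * (\<Sum>j\<le>M. \<bar>u j\<bar> powr p)"
proof -
  define m where "m = Max ((\<lambda>j. \<bar>u j\<bar>) ` {..M})"
  have "m \<in> (\<lambda>j. \<bar>u j\<bar>) ` {..M}"
    unfolding m_def by (intro Max_in) auto
  then obtain j0 where j0: "j0 \<le> M" "m = \<bar>u j0\<bar>"
    by auto
  have max: "\<bar>u j\<bar> \<le> \<bar>u j0\<bar>" if "j \<le> M" for j
    unfolding j0(2)[symmetric] m_def using that by (intro Max_ge) auto
  have "\<bar>\<Sum>j\<le>M. (-1) ^ (M - j) * real (M choose j) * u j\<bar> \<le> (\<Sum>j\<le>M. real (M choose j) * \<bar>u j\<bar>)"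
    by (rule order.trans[OF sum_abs]) (simp add: abs_mult power_abs)
  also have "\<dots> \<le> (\<Sum>j\<le>M. real (M choose j) * \<bar>u j0\<bar>)"
    using max by (intro sum_mono mult_left_mono) auto
  also have "\<dots> = 2^M * \<bar>u j0\<bar>"
    by (simp add: sum_distrib_right[symmetric] of_nat_sum[symmetric] choose_row_sum del: of_nat_sum)
  finally have "\<bar>\<Sum>j\<le>M. (-1) ^ (M - j) * real (M choose j) * u j\<bar> powr p \<le> (2^M) powr p * \<bar>u j0\<bar> powr p"
    using assms by (simp add: powr_mono2 flip: powr_mult)
  also have "\<dots> \<le> (2^M) powr p * (\<Sum>j\<le>M. \<bar>u j\<bar> powr p)"
    using j0 by (intro mult_left_mono member_le_sum) auto
  finally show ?thesis .
qed

lemma nn_integral_lborel_affine: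
  fixes F :: "'a::euclidean_space \<Rightarrow> ennreal"
  assumes [measurable]: "F \<in> borel_measurable borel" and c: "c \<noteq> 0"
  shows "(\<integral>\<^sup>+x. F x \<partial>lborel) = ennreal (\<bar>c\<bar>^DIM('a)) * (\<integral>\<^sup>+x. F (t + c *\<^sub>R x) \<partial>lborel)"
  by (subst lborel_affine[OF c, of t]) (simp add: nn_integral_density nn_integral_distr nn_integral_cmult)

lemma lborel_integrable_affine:
  fixes f :: "'a::euclidean_space \<Rightarrow> real"
  assumes f: "integrable lborel f" and c: "c \<noteq> 0"
  shows "integrable lborel (\<lambda>x. f (t + c *\<^sub>R x))"
  using f f[THEN borel_measurable_integrable] unfolding integrable_iff_bounded
  by (subst (asm) nn_integral_lborel_affine[where c=c and t=t]) (auto simp: ennreal_mult_less_top c)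

lemma lborel_integral_affine:
  fixes f :: "'a::euclidean_space \<Rightarrow> real"
  assumes f: "integrable lborel f" and c: "c \<noteq> 0"
  shows "(\<integral>x. f x \<partial>lborel) = \<bar>c\<bar>^DIM('a) * (\<integral>x. f (t + c *\<^sub>R x) \<partial>lborel)"
  using c f lborel_integrable_affine[OF f c, of t]
  by (subst lborel_affine[OF c, of t]) (simp add: integral_density integral_distr)

lemma lborel_integrable_dilate:
  fixes f :: "'a::euclidean_space \<Rightarrow> real"
  assumes "integrable lborel f" and "c > 0"
  shows "integrable lborel (\<lambda>x. f (c *\<^sub>R (x - w)))"
  using lborel_integrable_affine[OF assms(1), of c "-(c *\<^sub>R w)"] assms(2)
  by (simp add: scaleR_diff_right)

lemma lborel_integral_dilate:
  fixes f :: "'a::euclidean_space \<Rightarrow> real"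
  assumes "integrable lborel f" and "c > 0"
  shows "(\<integral>x. f (c *\<^sub>R (x - w)) \<partial>lborel) = (\<integral>x. f x \<partial>lborel) / c ^ DIM('a)"
  using lborel_integral_affine[OF assms(1), of c "-(c *\<^sub>R w)"] assms(2)
  by (simp add: scaleR_diff_right)

lemma integrable_fdiff_powr:
  assumes f: "in_Lp p f" and p: "p > 0"
  shows "integrable lborel (\<lambda>x. \<bar>fdiff M h f x\<bar> powr p)"
proof -
  have [measurable]: "f \<in> borel_measurable borel"
    using f unfolding in_Lp_def by simp
  define G where "G x = (2^M) powr p * (\<Sum>j\<le>M. \<bar>f (x + real j *\<^sub>R h)\<bar> powr p)" for x
  have "integrable lborel (\<lambda>x. \<bar>f (x + real j *\<^sub>R h)\<bar> powr p)" for j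
    using lborel_integrable_affine[of "\<lambda>x. \<bar>f x\<bar> powr p" 1 "real j *\<^sub>R h"] f
    by (simp add: in_Lp_def add.commute)
  then have G_integrable: "integrable lborel G"
    unfolding G_def by (intro integrable_mult_right Bochner_Integration.integrable_sum)
  have "\<bar>fdiff M h f x\<bar> powr p \<le> G x" for x
    unfolding fdiff_def G_def by (rule abs_alternating_binomial_sum_powr_le[OF p])
  then have "AE x in lborel. norm (\<bar>fdiff M h f x\<bar> powr p) \<le> norm (G x)"
    by (intro AE_I2) (metis abs_of_nonneg order.trans powr_ge_zero real_norm_def)
  moreover have "(\<lambda>x. \<bar>fdiff M h f x\<bar> powr p) \<in> borel_measurable lborel"
    unfolding fdiff_def by measurable
  ultimately show ?thesis
    using Bochner_Integration.integrable_bound[OF G_integrable] by blast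
qed

lemma Lp_norm_mono:
  assumes "p > 0" and "integrable lborel (\<lambda>x. \<bar>g x\<bar> powr p)" and "\<And>x. \<bar>f x\<bar> \<le> \<bar>g x\<bar>"
  shows "Lp_norm p f \<le> Lp_norm p g"
proof -
  have "(\<integral>x. \<bar>f x\<bar> powr p \<partial>lborel) \<le> (\<integral>x. \<bar>g x\<bar> powr p \<partial>lborel)"
    using assms by (intro integral_mono' powr_mono2) auto
  then show ?thesis
    unfolding Lp_norm_def using assms(1) by (intro powr_mono2 integral_nonneg) auto
qed

lemma schwartz_bounded:
  assumes "schwartz \<phi>"
  obtains B where "B \<ge> 0" and "\<And>x. \<bar>\<phi> x\<bar> \<le> B"
proof -
  have "bounded (range (\<lambda>x. (1 + norm x) ^ 0 * pdiffs [] \<phi> x))"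
    using assms unfolding schwartz_def by blast
  then obtain B where "\<And>x. \<bar>\<phi> x\<bar> \<le> B"
    by (auto simp: bounded_iff)
  with that show ?thesis
    using abs_ge_zero order.trans by blast
qed

lemma continuous_on_smooth_fun:
  assumes "smooth_fun g"
  shows "continuous_on UNIV g"
proof -
  have "g differentiable (at x)" for x
    using assms unfolding smooth_fun_def by (metis pdiffs.simps(1))
  then show ?thesis
    by (intro continuous_at_imp_continuous_on) (auto intro: differentiable_imp_continuous_within)
qed

lemma schwartz_borel_measurable:
  assumes "schwartz \<phi>"
  shows "\<phi> \<in> borel_measurable borel"
  using assms unfolding schwartz_def by (intro borel_measurable_continuous_onI continuous_on_smooth_fun) auto

locale admissible_generator =
  fixes \<psi> :: "real^'n::finite \<Rightarrow> real" and r0 :: real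
  assumes admissible: "admissible_psi \<psi> r0"
begin

definition radius :: real where "radius = 2 powr r0"

lemma radius_ge_1: "radius \<ge> 1"
  using admissible unfolding admissible_psi_def radius_def by (simp add: ge_one_powr_ge_zero)

lemma psi_nonneg: "\<psi> x \<ge> 0"
  using admissible unfolding admissible_psi_def by blast

lemma psi_support: "\<psi> y \<noteq> 0 \<Longrightarrow> norm y < radius"
  using admissible closure_subset[of "{x. \<psi> x \<noteq> 0}"]
  unfolding admissible_psi_def radius_def by auto

lemma continuous_on_psi: "continuous_on UNIV \<psi>"
  using admissible unfolding admissible_psi_def by (intro continuous_on_smooth_fun) auto

lemma borel_measurable_psi[measurable]: "\<psi> \<in> borel_measurable borel"
  using continuous_on_psi by (rule borel_measurable_continuous_onI)

lemma integrable_psi_powr: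
  assumes "e > 0"
  shows "integrable lborel (\<lambda>y. \<bar>\<psi> y\<bar> powr e)"
proof -
  have "continuous_on (cball 0 radius) (\<lambda>y. \<bar>\<psi> y\<bar> powr e)"
    using assms by (intro continuous_on_powr' continuous_intros continuous_on_subset[OF continuous_on_psi]) auto
  then have "integrable lborel (\<lambda>y. indicator (cball 0 radius) y *\<^sub>R (\<bar>\<psi> y\<bar> powr e))"
    by (rule borel_integrable_compact[OF compact_cball])
  moreover have "(\<lambda>y. indicator (cball 0 radius) y *\<^sub>R (\<bar>\<psi> y\<bar> powr e)) = (\<lambda>y. \<bar>\<psi> y\<bar> powr e)"
    using psi_support assms by (force simp: indicator_def)
  ultimately show ?thesis
    by simp
qed

text \<open>The integer translates of \<open>\<psi>\<close> sum to \<open>1\<close>.\<close>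
lemma psi_positive_somewhere: "\<exists>y. \<psi> y > 0"
proof (rule ccontr)
  assume "\<nexists>y. \<psi> y > 0"
  then have "\<psi> = (\<lambda>_. 0)"
    using psi_nonneg by (auto intro!: antisym simp: not_less le_fun_def)
  moreover have "((\<lambda>k. \<psi> (0 - int_vec k)) has_sum 1) UNIV"
    using admissible unfolding admissible_psi_def by blast
  ultimately show False
    using has_sum_unique[OF has_sum_0_simp] by force
qed

lemma integral_psi_powr_pos:
  assumes e: "e > 0"
  shows "(\<integral>y. \<bar>\<psi> y\<bar> powr e \<partial>lborel) > 0"
proof -
  obtain y0 where y0: "\<psi> y0 > 0"
    using psi_positive_somewhere by blast
  then obtain d where d: "d > 0" and near: "\<And>y. dist y y0 < d \<Longrightarrow> dist (\<psi> y) (\<psi> y0) < \<psi> y0 / 2"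
    using continuous_on_psi unfolding continuous_on_eq_continuous_at[OF open_UNIV] continuous_at_eps_delta
    by (metis UNIV_I half_gt_zero)
  define c where "c = (\<psi> y0 / 2) powr e"
  have below: "c * indicator (ball y0 d) y \<le> \<bar>\<psi> y\<bar> powr e" for y
  proof (cases "y \<in> ball y0 d")
    case True
    then have "\<psi> y0 / 2 \<le> \<bar>\<psi> y\<bar>"
      using near[of y] by (auto simp: dist_commute dist_real_def abs_if split: if_splits)
    then show ?thesis
      using True y0 e by (simp add: c_def powr_mono2)
  qed (simp add: c_def)
  have "emeasure lborel (ball y0 d) < \<infinity>"
    by (rule emeasure_bounded_finite) simp
  then have "integrable lborel (\<lambda>y. c * indicator (ball y0 d) y :: real)"
    by (simp add: integrable_indicator_iff)
  moreover have "0 < c * measure lborel (ball y0 d)"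
    using y0 d by (simp add: c_def)
  ultimately show ?thesis
    using integral_mono[OF _ integrable_psi_powr[OF e] below] by simp
qed

end

section \<open>The lacunary sum of bumps\<close>

locale lacunary_counterexample = admissible_generator \<psi> r0
  for \<psi> :: "real^'n::finite \<Rightarrow> real" and r0 +
  fixes s p q :: real
  assumes s_pos: "s > 0" and p_ge_1: "p \<ge> 1" and q_ge_1: "q \<ge> 1"
begin

lemma p_pos: "p > 0"
  using p_ge_1 by simp

lemma q_pos: "q > 0"
  using q_ge_1 by simp

definition spacing :: nat where
  "spacing = nat \<lceil>4 * radius\<rceil> + 1"

text \<open>\<open>undefined\<close> merely selects some coordinate axis.\<close>
definition direction :: "real^'n" where
  "direction = axis undefined 1"

definition centre :: "nat \<Rightarrow> real^'n" where
  "centre \<nu> = real (spacing * \<nu>) *\<^sub>R direction"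

definition lattice_point :: "nat \<Rightarrow> 'n \<Rightarrow> int" where
  "lattice_point \<nu> = (\<lambda>i. if i = undefined then int (2^\<nu> * spacing * \<nu>) else 0)"

definition weight :: "nat \<Rightarrow> real" where
  "weight \<nu> = (if \<exists>j. \<nu> = 2^j then real \<nu> else 0)"

text \<open>\<open>coeff r \<nu>\<close> is the coefficient of the \<open>\<nu>\<close>-th bump as a multiple of the \<open>(r,p)\<close>-quark with
  \<open>\<beta> = 0\<close> and \<open>m = lattice_point \<nu>\<close>. Thus \<open>coeff (N/p) \<nu>\<close> is the height of the bump, and
  \<open>coeff s \<nu> = weight \<nu> powr (1/q)\<close> is the \<open>\<lambda>\<^sub>\<nu>\<close> above.
\<close>
definition coeff :: "real \<Rightarrow> nat \<Rightarrow> real" where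
  "coeff r \<nu> = weight \<nu> powr (1/q) * 2 powr (- real \<nu> * (s - r))"

definition bump :: "nat \<Rightarrow> real^'n \<Rightarrow> real" where
  "bump \<nu> x = coeff (real CARD('n) / p) \<nu> * \<psi> (2^\<nu> *\<^sub>R (x - centre \<nu>))"

definition F :: "real^'n \<Rightarrow> real" where
  "F x = (\<Sum>\<nu>. bump \<nu> x)"

definition quark_coef :: "real \<Rightarrow> ('n \<Rightarrow> nat) \<Rightarrow> nat \<Rightarrow> ('n \<Rightarrow> int) \<Rightarrow> real" where
  "quark_coef r \<beta> \<nu> m = (if \<beta> = (\<lambda>_. 0) \<and> m = lattice_point \<nu> then coeff r \<nu> else 0)"

definition step :: "nat \<Rightarrow> real^'n" where
  "step \<nu> = (2 * radius / 2^\<nu>) *\<^sub>R direction"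

lemma spacing_gt: "real spacing > 4 * radius"
  unfolding spacing_def by linarith

lemma norm_direction [simp]: "norm direction = 1"
  by (simp add: direction_def)

lemma int_vec_lattice_point: "int_vec (lattice_point \<nu>) = 2^\<nu> *\<^sub>R centre \<nu>"
  unfolding int_vec_def lattice_point_def centre_def direction_def by (simp add: vec_eq_iff axis_def)

lemma weight_nonneg: "weight \<nu> \<ge> 0"
  by (simp add: weight_def)

lemma weight_le: "weight \<nu> \<le> real \<nu>"
  by (simp add: weight_def)

lemma coeff_nonneg: "coeff r \<nu> \<ge> 0"
  by (simp add: coeff_def)

lemma bump_support:
  assumes "bump \<nu> x \<noteq> 0"
  shows "norm (x - centre \<nu>) < radius / 2^\<nu>"
proof -
  have "2^\<nu> * norm (x - centre \<nu>) < radius"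
    using psi_support[of "2^\<nu> *\<^sub>R (x - centre \<nu>)"] assms by (simp add: bump_def)
  then show ?thesis
    by (simp add: field_simps)
qed

lemma radius_div_pow2_le: "radius / 2^\<nu> \<le> radius"
  using radius_ge_1 by (simp add: divide_le_eq mult_le_cancel_left1 one_le_power)

lemma norm_centre_diff_ge:
  assumes "\<nu> \<noteq> \<nu>'"
  shows "real spacing \<le> norm (centre \<nu> - centre \<nu>')"
proof -
  have "centre \<nu> - centre \<nu>' = (real spacing * (real \<nu> - real \<nu>')) *\<^sub>R direction"
    unfolding centre_def by (simp add: algebra_simps)
  moreover have "1 \<le> \<bar>real \<nu> - real \<nu>'\<bar>"
    using assms by linarith
  ultimately show ?thesis
    by (simp add: abs_mult mult_le_cancel_left1)
qed

lemma bump_disjoint: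
  assumes "bump \<nu> x \<noteq> 0" and "bump \<nu>' x \<noteq> 0"
  shows "\<nu> = \<nu>'"
proof (rule ccontr)
  assume "\<nu> \<noteq> \<nu>'"
  have "norm (centre \<nu> - centre \<nu>') < radius + radius"
    using bump_support[OF assms(1)] bump_support[OF assms(2)] radius_div_pow2_le[of \<nu>]
      radius_div_pow2_le[of \<nu>']
    by (intro norm_diff_triangle_less[of _ x]) (auto simp: norm_minus_commute)
  then show False
    using norm_centre_diff_ge[OF \<open>\<nu> \<noteq> \<nu>'\<close>] spacing_gt radius_ge_1 by linarith
qed

lemma bump_sums_single:
  assumes "bump \<nu> x \<noteq> 0" and "G 0 = 0"
  shows "(\<lambda>n. G (bump n x)) sums G (bump \<nu> x)"
proof -
  have "G (bump n x) = (if n = \<nu> then G (bump n x) else 0)" for n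
    using bump_disjoint[OF assms(1), of n] assms(2) by (cases "bump n x = 0") auto
  then show ?thesis
    using sums_single[of \<nu> "\<lambda>n. G (bump n x)"] by simp
qed

lemma F_eq_bump: "bump \<nu> x \<noteq> 0 \<Longrightarrow> F x = bump \<nu> x"
  using bump_sums_single[of \<nu> x "\<lambda>t. t"] unfolding F_def by (simp add: sums_iff)

lemma F_eq_zero: "(\<And>\<nu>. bump \<nu> x = 0) \<Longrightarrow> F x = 0"
  by (simp add: F_def)

lemma sums_F:
  fixes G :: "real \<Rightarrow> real"
  assumes "G 0 = 0"
  shows "(\<lambda>n. G (bump n x)) sums G (F x)"
proof (cases "\<exists>\<nu>. bump \<nu> x \<noteq> 0")
  case True
  then obtain \<nu> where "bump \<nu> x \<noteq> 0"
    by blast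
  then show ?thesis
    using bump_sums_single[of \<nu> x G] assms F_eq_bump by simp
next
  case False
  then show ?thesis
    using assms F_eq_zero by auto
qed

lemma borel_measurable_bump [measurable]: "bump \<nu> \<in> borel_measurable borel"
  unfolding bump_def by measurable

lemma borel_measurable_F [measurable]: "F \<in> borel_measurable borel"
  unfolding F_def by measurable

lemma abs_bump_powr:
  "e > 0 \<Longrightarrow> \<bar>bump \<nu> x\<bar> powr e
     = coeff (real CARD('n) / p) \<nu> powr e * \<bar>\<psi> (2^\<nu> *\<^sub>R (x - centre \<nu>))\<bar> powr e"
  unfolding bump_def using coeff_nonneg by (simp add: powr_mult abs_mult)

lemma integrable_bump_powr: "e > 0 \<Longrightarrow> integrable lborel (\<lambda>x. \<bar>bump \<nu> x\<bar> powr e)"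
  unfolding abs_bump_powr by (intro integrable_mult_right lborel_integrable_dilate integrable_psi_powr) auto

lemma integral_bump_powr:
  assumes "e > 0"
  shows "(\<integral>x. \<bar>bump \<nu> x\<bar> powr e \<partial>lborel)
           = coeff (real CARD('n) / p) \<nu> powr e * (\<integral>y. \<bar>\<psi> y\<bar> powr e \<partial>lborel)
             * 2 powr (- real \<nu> * CARD('n))"
proof -
  have "(\<integral>x. \<bar>\<psi> (2^\<nu> *\<^sub>R (x - centre \<nu>))\<bar> powr e \<partial>lborel)
          = (\<integral>y. \<bar>\<psi> y\<bar> powr e \<partial>lborel) / ((2::real) ^ \<nu>) ^ CARD('n)"
    using lborel_integral_dilate[OF integrable_psi_powr[OF assms], of "2^\<nu>" "centre \<nu>"] by simp
  moreover have "((2::real) ^ \<nu>) ^ CARD('n) = 2 powr (real \<nu> * CARD('n))"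
    by (simp add: powr_realpow[symmetric] powr_powr)
  ultimately show ?thesis
    unfolding abs_bump_powr[OF assms] by (simp add: powr_minus divide_inverse)
qed

lemma coeff_powr_decay:
  assumes "0 < e" and "e \<le> p"
  shows "coeff (real CARD('n) / p) \<nu> powr e * 2 powr (- real \<nu> * CARD('n))
           \<le> real \<nu> powr (e/q) * 2 powr (-(s * e) * real \<nu>)"
proof -
  let ?N = "real CARD('n)"
  have "(weight \<nu> powr (1/q)) powr e = weight \<nu> powr (e/q)"
    by (simp add: powr_powr)
  also have "\<dots> \<le> real \<nu> powr (e/q)"
    using weight_nonneg weight_le assms q_pos by (intro powr_mono2) auto
  finally have weight_part: "(weight \<nu> powr (1/q)) powr e \<le> real \<nu> powr (e/q)" .
  have "e / p \<le> 1"
    using assms by simp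
  then have "?N * (e/p) \<le> ?N"
    using mult_left_mono[of "e/p" 1 ?N] by simp
  then have "real \<nu> * (?N * (e/p)) \<le> real \<nu> * ?N"
    by (intro mult_left_mono) auto
  then have "- real \<nu> * (s - ?N/p) * e + - real \<nu> * ?N \<le> -(s * e) * real \<nu>"
    by (simp add: algebra_simps)
  then have "(2 powr (- real \<nu> * (s - ?N/p))) powr e * 2 powr (- real \<nu> * ?N) \<le> 2 powr (-(s * e) * real \<nu>)"
    by (simp add: powr_powr powr_add[symmetric])
  with weight_part show ?thesis
    unfolding coeff_def using weight_nonneg
    by (simp add: powr_mult mult.assoc mult_mono)
qed

lemma summable_integral_bump_powr:
  assumes "0 < e" and "e \<le> p"
  shows "summable (\<lambda>\<nu>. \<integral>x. \<bar>bump \<nu> x\<bar> powr e \<partial>lborel)"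
proof (rule summable_comparison_test')
  define I where "I = (\<integral>y. \<bar>\<psi> y\<bar> powr e \<partial>lborel)"
  have "I \<ge> 0"
    unfolding I_def by simp
  show "summable (\<lambda>\<nu>. I * (real \<nu> powr (e/q) * 2 powr (-(s * e) * real \<nu>)))"
    using assms s_pos by (intro summable_mult summable_powr_mult_exp) simp
  show "norm (\<integral>x. \<bar>bump \<nu> x\<bar> powr e \<partial>lborel) \<le> I * (real \<nu> powr (e/q) * 2 powr (-(s * e) * real \<nu>))" for \<nu>
    using mult_left_mono[OF coeff_powr_decay[OF assms, of \<nu>] \<open>I \<ge> 0\<close>]
    unfolding integral_bump_powr[OF assms(1)] I_def by (simp add: ac_simps)
qed

text \<open>At every point at most one term of \<open>\<Sum>\<nu>. H x (bump \<nu> x)\<close> is nonzero, so the series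
  can be integrated termwise.\<close>
lemma integrable_has_sum_bumps:
  fixes H :: "real^'n \<Rightarrow> real \<Rightarrow> real"
  assumes e: "0 < e" "e \<le> p"
    and H_zero: "\<And>x. H x 0 = 0"
    and H_bound: "\<And>x t. \<bar>H x t\<bar> \<le> B * \<bar>t\<bar> powr e"
    and H_measurable: "\<And>\<nu>. (\<lambda>x. H x (bump \<nu> x)) \<in> borel_measurable lborel"
  shows "integrable lborel (\<lambda>x. H x (F x))"
    and "((\<lambda>\<nu>. \<integral>x. H x (bump \<nu> x) \<partial>lborel) has_sum (\<integral>x. H x (F x) \<partial>lborel)) UNIV"
proof -
  have integrable: "integrable lborel (\<lambda>x. H x (bump \<nu> x))" for \<nu>
  proof (rule Bochner_Integration.integrable_bound[OF _ H_measurable])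
    show "integrable lborel (\<lambda>x. B * \<bar>bump \<nu> x\<bar> powr e)"
      using integrable_bump_powr[OF e(1)] by simp
    show "AE x in lborel. norm (H x (bump \<nu> x)) \<le> norm (B * \<bar>bump \<nu> x\<bar> powr e)"
      using H_bound by (intro AE_I2) (metis abs_ge_self order.trans real_norm_def)
  qed
  have "B \<ge> 0"
    using H_bound[of undefined 1] abs_ge_zero order.trans by fastforce
  have integral_norm_le: "(\<integral>x. norm (H x (bump \<nu> x)) \<partial>lborel) \<le> B * (\<integral>x. \<bar>bump \<nu> x\<bar> powr e \<partial>lborel)" for \<nu>
  proof -
    have "(\<integral>x. norm (H x (bump \<nu> x)) \<partial>lborel) \<le> (\<integral>x. B * \<bar>bump \<nu> x\<bar> powr e \<partial>lborel)"
      using integrable_bump_powr[OF e(1)] H_bound \<open>B \<ge> 0\<close> by (intro integral_mono') auto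
    then show ?thesis
      by simp
  qed
  have summable_norm: "summable (\<lambda>\<nu>. \<integral>x. norm (H x (bump \<nu> x)) \<partial>lborel)"
    by (rule summable_comparison_test'[OF summable_mult[OF summable_integral_bump_powr[OF e], of B]])
       (use integral_norm_le in simp)
  have pointwise: "(\<lambda>\<nu>. H x (bump \<nu> x)) sums H x (F x)" for x
    using sums_F[of "H x"] H_zero by simp
  have "AE x in lborel. summable (\<lambda>\<nu>. norm (H x (bump \<nu> x)))"
    using sums_F[of "\<lambda>t. norm (H _ t)"] H_zero by (auto intro: sums_summable)
  note series = integrable_suminf[OF integrable this summable_norm]
    sums_integral[OF integrable this summable_norm]
  have "(\<lambda>x. \<Sum>\<nu>. H x (bump \<nu> x)) = (\<lambda>x. H x (F x))"
    using pointwise by (simp add: sums_iff)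
  with series show "integrable lborel (\<lambda>x. H x (F x))"
    by simp
  from series have sums: "(\<lambda>\<nu>. \<integral>x. H x (bump \<nu> x) \<partial>lborel) sums (\<integral>x. H x (F x) \<partial>lborel)"
    unfolding \<open>(\<lambda>x. \<Sum>\<nu>. H x (bump \<nu> x)) = (\<lambda>x. H x (F x))\<close> by simp
  have "summable (\<lambda>\<nu>. norm (\<integral>x. H x (bump \<nu> x) \<partial>lborel))"
    by (rule summable_comparison_test'[OF summable_norm]) (simp add: integral_norm_bound)
  then show "((\<lambda>\<nu>. \<integral>x. H x (bump \<nu> x) \<partial>lborel) has_sum (\<integral>x. H x (F x) \<partial>lborel)) UNIV"
    using sums by (rule norm_summable_imp_has_sum)
qed

lemma in_Lp_F: "in_Lp p F"
  using integrable_has_sum_bumps(1)[of p "\<lambda>_ t. \<bar>t\<bar> powr p" 1] p_pos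
  unfolding in_Lp_def by simp

lemma integral_pairing_has_sum:
  assumes "schwartz \<phi>"
  shows "((\<lambda>\<nu>. \<integral>x. bump \<nu> x * \<phi> x \<partial>lborel) has_sum (\<integral>x. F x * \<phi> x \<partial>lborel)) UNIV"
proof -
  obtain B where "\<And>x. \<bar>\<phi> x\<bar> \<le> B"
    using schwartz_bounded[OF assms] by blast
  then have "\<bar>t * \<phi> x\<bar> \<le> B * \<bar>t\<bar> powr 1" for x t
    using mult_left_mono[of "\<bar>\<phi> x\<bar>" B "\<bar>t\<bar>"] by (simp add: abs_mult mult.commute)
  moreover have [measurable]: "\<phi> \<in> borel_measurable borel"
    using schwartz_borel_measurable[OF assms] .
  ultimately show ?thesis
    using integrable_has_sum_bumps(2)[of 1 "\<lambda>x t. t * \<phi> x" B] p_ge_1 by simp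
qed

lemma quark_coef_mult_quark:
  "quark_coef r (\<lambda>_. 0) \<nu> (lattice_point \<nu>) * quark \<psi> r p (\<lambda>_. 0) \<nu> (lattice_point \<nu>) x = bump \<nu> x"
proof -
  have "2 powr (- real \<nu> * (s - r)) * 2 powr (- real \<nu> * (r - real CARD('n) / p))
      = 2 powr (- real \<nu> * (s - real CARD('n) / p))"
    by (simp add: powr_add[symmetric] algebra_simps)
  then show ?thesis
    unfolding quark_def quark_coef_def coeff_def bump_def Let_def mpow_def
    by (simp add: int_vec_lattice_point scaleR_diff_right mult_ac)
qed

lemma quark_repr_F: "quark_repr \<psi> r p F (quark_coef r)"
  unfolding quark_repr_def
proof (intro allI impI)
  fix \<phi> :: "real^'n \<Rightarrow> real"
  assume \<phi>: "schwartz \<phi>"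
  define T where "T = (\<lambda>(\<beta>, \<nu>, m). quark_coef r \<beta> \<nu> m * (\<integral>x. quark \<psi> r p \<beta> \<nu> m x * \<phi> x \<partial>lborel))"
  define level where "level \<nu> = ((\<lambda>_::'n. 0::nat), \<nu>, lattice_point \<nu>)" for \<nu>
  have "inj level"
    by (auto simp: level_def inj_on_def)
  have "(T \<circ> level) \<nu> = (\<integral>x. bump \<nu> x * \<phi> x \<partial>lborel)" for \<nu>
    unfolding T_def level_def
    by (simp add: mult.assoc[symmetric] quark_coef_mult_quark flip: integral_mult_right_zero)
  then have "(T has_sum (\<integral>x. F x * \<phi> x \<partial>lborel)) (range level)"
    using integral_pairing_has_sum[OF \<phi>] has_sum_reindex[OF \<open>inj level\<close>, of T] by (simp add: comp_def)
  moreover have "T w = 0" if "w \<notin> range level" for w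
    using that by (cases w) (auto simp: T_def quark_coef_def level_def)
  ultimately show "(T has_sum (\<integral>x. F x * \<phi> x \<partial>lborel)) UNIV"
    by (rule has_sum_cong_neutral[THEN iffD1, rotated -1]) auto
qed

subsection \<open>Quark norm\<close>

lemma coeff_powr_q: "coeff r \<nu> powr q = weight \<nu> * (2 powr (-((s - r) * q))) ^ \<nu>"
proof -
  have "(weight \<nu> powr (1/q)) powr q = weight \<nu>"
    using weight_nonneg q_pos by (simp add: powr_powr)
  moreover have "(2 powr (- real \<nu> * (s - r))) powr q = (2 powr (-((s - r) * q))) ^ \<nu>"
    by (simp add: powr_powr powr_realpow[symmetric] algebra_simps)
  ultimately show ?thesis
    unfolding coeff_def using weight_nonneg by (simp add: powr_mult)
qed

lemma level_norm_quark_coef: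
  "ennpow (ennpow (\<integral>\<^sup>+m. ennreal (\<bar>quark_coef r (\<lambda>_. 0) \<nu> m\<bar> powr p) \<partial>count_space UNIV) (1/p)) q
     = ennreal (weight \<nu> * (2 powr (-((s - r) * q))) ^ \<nu>)"
proof -
  have "(\<lambda>m. ennreal (\<bar>quark_coef r (\<lambda>_. 0) \<nu> m\<bar> powr p))
      = (\<lambda>m. ennreal (coeff r \<nu> powr p * indicator {lattice_point \<nu>} m))"
    by (auto simp: quark_coef_def coeff_nonneg indicator_def)
  then have "(\<integral>\<^sup>+m. ennreal (\<bar>quark_coef r (\<lambda>_. 0) \<nu> m\<bar> powr p) \<partial>count_space UNIV) = ennreal (coeff r \<nu> powr p)"
    by simp
  then show ?thesis
    using coeff_nonneg p_pos by (simp add: ennpow_def powr_powr coeff_powr_q)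
qed

lemma sum_weight_le:
  fixes y :: real
  assumes "0 \<le> y"
  shows "(\<Sum>\<nu><n. weight \<nu> * y^\<nu>) \<le> (\<Sum>j<n. 2^j * y^(2^j))"
proof -
  let ?J = "{j. (2::nat)^j < n}"
  have J_subset: "?J \<subseteq> {..<n}"
    by (auto intro: less_trans[OF less_exp])
  have "(\<Sum>\<nu><n. weight \<nu> * y^\<nu>) = (\<Sum>\<nu>\<in>(\<lambda>j. 2^j) ` ?J. weight \<nu> * y^\<nu>)"
    by (rule sum.mono_neutral_right) (auto simp: weight_def)
  also have "\<dots> = (\<Sum>j\<in>?J. 2^j * y^(2^j))"
    by (subst sum.reindex) (auto simp: inj_on_def weight_def)
  also have "\<dots> \<le> (\<Sum>j<n. 2^j * y^(2^j))"
    using J_subset assms by (intro sum_mono2) auto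
  finally show ?thesis .
qed

lemma coef_norm_quark_coef_le:
  assumes "0 < r" and "r < s"
  shows "coef_norm \<rho> p q (quark_coef r) \<le> ennreal ((3 / (1 - 2 powr (-((s - r) * q)))) powr (1/q))"
proof -
  define Y where "Y = 2 powr (-((s - r) * q))"
  have Y: "0 \<le> Y" "Y < 1"
    unfolding Y_def using assms q_pos by (auto simp: powr_less_one)
  have nonneg: "0 \<le> weight \<nu> * Y^\<nu>" for \<nu>
    using weight_nonneg Y by simp
  have partial: "(\<Sum>\<nu><n. weight \<nu> * Y^\<nu>) \<le> 3 / (1 - Y)" for n
    using sum_weight_le[OF Y(1), of n] sum_lacunary_le[OF Y, of n] by linarith
  then have summable: "summable (\<lambda>\<nu>. weight \<nu> * Y^\<nu>)"
    by (intro bounded_imp_summable[OF nonneg]) (simp only: lessThan_Suc_atMost[symmetric])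
  have total: "(\<Sum>\<nu>. weight \<nu> * Y^\<nu>) \<le> 3 / (1 - Y)"
    by (rule suminf_le_const[OF summable partial])
  have total_nonneg: "(\<Sum>\<nu>. weight \<nu> * Y^\<nu>) \<ge> 0"
    by (rule suminf_nonneg[OF summable nonneg])
  show ?thesis
    unfolding coef_norm_def
  proof (rule SUP_least)
    fix \<beta> :: "'n \<Rightarrow> nat"
    show "ennreal (2 powr (\<rho> * real (mabs \<beta>))) * ennpow (\<integral>\<^sup>+\<nu>. ennpow (ennpow (\<integral>\<^sup>+m.
            ennreal (\<bar>quark_coef r \<beta> \<nu> m\<bar> powr p) \<partial>count_space UNIV) (1/p)) q \<partial>count_space UNIV) (1/q)
          \<le> ennreal ((3 / (1 - 2 powr (-((s - r) * q)))) powr (1/q))"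
    proof (cases "\<beta> = (\<lambda>_. 0)")
      case True
      have "(\<Sum>\<nu>. weight \<nu> * Y^\<nu>) powr (1/q) \<le> (3 / (1 - Y)) powr (1/q)"
        using total total_nonneg q_pos by (intro powr_mono2) auto
      moreover have "(\<integral>\<^sup>+\<nu>. ennpow (ennpow (\<integral>\<^sup>+m. ennreal (\<bar>quark_coef r (\<lambda>_. 0) \<nu> m\<bar> powr p)
          \<partial>count_space UNIV) (1/p)) q \<partial>count_space UNIV) = ennreal (\<Sum>\<nu>. weight \<nu> * Y^\<nu>)"
        by (simp add: level_norm_quark_coef Y_def[symmetric] nn_integral_count_space_nat
              suminf_ennreal2[OF nonneg summable])
      ultimately show ?thesis
        using total_nonneg unfolding True by (simp add: mabs_def ennpow_def Y_def)
    next
      case False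
      then show ?thesis
        by (simp add: quark_coef_def ennpow_def)
    qed
  qed
qed

lemma weighted_quark_besov_norm_le:
  assumes r: "0 < r" "r < s"
  shows "ennreal ((s - r) powr (1/q)) * quark_besov_norm \<psi> \<rho> r p q F
           \<le> ennreal ((3 * (1 + s * q * ln 2) / (q * ln 2)) powr (1/q))"
proof -
  define e where "e = (s - r) * q"
  have e: "0 < e" "e \<le> s * q"
    unfolding e_def using r q_pos by auto
  then have "2 powr (-e) < 1"
    by (simp add: powr_less_one)
  have "quark_besov_norm \<psi> \<rho> r p q F \<le> coef_norm \<rho> p q (quark_coef r)"
    unfolding quark_besov_norm_def using quark_repr_F by (intro INF_lower) simp
  also have "\<dots> \<le> ennreal ((3 / (1 - 2 powr (-e))) powr (1/q))"
    using coef_norm_quark_coef_le[OF r] by (simp add: e_def)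
  finally have "ennreal ((s - r) powr (1/q)) * quark_besov_norm \<psi> \<rho> r p q F
      \<le> ennreal ((s - r) powr (1/q)) * ennreal ((3 / (1 - 2 powr (-e))) powr (1/q))"
    by (rule mult_left_mono) simp
  also have "\<dots> = ennreal (((s - r) * (3 / (1 - 2 powr (-e)))) powr (1/q))"
  proof -
    have "0 \<le> 3 / (1 - 2 powr (-e))"
      using \<open>2 powr (-e) < 1\<close> by simp
    then show ?thesis
      using r by (subst powr_mult) (auto simp: ennreal_mult[symmetric])
  qed
  also have "\<dots> \<le> ennreal ((3 * (1 + s * q * ln 2) / (q * ln 2)) powr (1/q))"
  proof -
    have "(s - r) * (3 / (1 - 2 powr (-e))) = 3 / q * (e / (1 - 2 powr (-e)))"
      using q_pos by (simp add: e_def)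
    also have "\<dots> \<le> 3 / q * ((1 + e * ln 2) / ln 2)"
      using divide_one_minus_exp2_le[OF e(1)] q_pos by (intro mult_left_mono) auto
    also have "\<dots> \<le> 3 * (1 + s * q * ln 2) / (q * ln 2)"
      using e q_pos by (simp add: field_simps)
    finally show ?thesis
      using r \<open>2 powr (-e) < 1\<close> q_pos by (intro ennreal_leI powr_mono2) auto
  qed
  finally show ?thesis .
qed

subsection \<open>Differences\<close>

lemma norm_step: "norm (step \<nu>) = 2 * radius / 2^\<nu>"
  using radius_ge_1 by (simp add: step_def)

text \<open>Steps \<open>j\<close> with \<open>1 \<le> j \<le> M\<close> leave the support of the \<open>\<nu>\<close>-th bump but stay within
  \<open>2 radius\<close>, too short to reach any other bump.\<close>
lemma bump_translate_vanishes:
  assumes M: "real M \<le> 2^\<nu>" and x: "bump \<nu> x \<noteq> 0" and j: "1 \<le> j" "j \<le> M"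
  shows "bump \<nu>' (x + real j *\<^sub>R step \<nu>) = 0"
proof (rule ccontr)
  define y where "y = x + real j *\<^sub>R step \<nu>"
  assume "bump \<nu>' (x + real j *\<^sub>R step \<nu>) \<noteq> 0"
  then have y_near: "norm (y - centre \<nu>') < radius / 2^\<nu>'"
    unfolding y_def by (rule bump_support)
  have x_near: "norm (centre \<nu> - x) < radius / 2^\<nu>"
    using bump_support[OF x] by (simp add: norm_minus_commute)
  have x_y: "norm (x - y) = real j * (2 * radius / 2^\<nu>)"
    by (simp add: y_def norm_step)
  show False
  proof (cases "\<nu>' = \<nu>")
    case True
    have "norm (x - y) \<le> norm (x - centre \<nu>) + norm (centre \<nu> - y)"
      by (rule norm_diff_triangle_le[OF order_refl order_refl])
    moreover have "2 * radius / 2^\<nu> \<le> real j * (2 * radius / 2^\<nu>)"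
      using j radius_ge_1 mult_right_mono[of 1 "real j" "2 * radius / 2^\<nu>"] by simp
    ultimately show False
      using x_near y_near True x_y by (simp add: norm_minus_commute)
  next
    case False
    have "real j * (2 * radius / 2^\<nu>) \<le> 2^\<nu> * (2 * radius / 2^\<nu>)"
      using j M radius_ge_1 by (intro mult_right_mono) auto
    then have "norm (x - y) \<le> 2 * radius"
      using x_y by simp
    have "norm (centre \<nu> - y) \<le> norm (centre \<nu> - x) + norm (x - y)"
      by (rule norm_diff_triangle_le[OF order_refl order_refl])
    then have "norm (centre \<nu> - centre \<nu>') \<le> (norm (centre \<nu> - x) + norm (x - y)) + norm (y - centre \<nu>')"
      by (rule norm_diff_triangle_le[OF _ order_refl])
    then show False
      using norm_centre_diff_ge[OF False[symmetric]] spacing_gt x_near y_near \<open>norm (x - y) \<le> 2 * radius\<close>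
        radius_div_pow2_le[of \<nu>] radius_div_pow2_le[of \<nu>'] by linarith
  qed
qed

lemma abs_bump_le_fdiff_F:
  assumes "real M \<le> 2^\<nu>"
  shows "\<bar>bump \<nu> x\<bar> \<le> \<bar>fdiff M (step \<nu>) F x\<bar>"
proof (cases "bump \<nu> x = 0")
  case False
  have "F (x + real j *\<^sub>R step \<nu>) = 0" if "j \<in> {..M} - {0}" for j
    using that by (intro F_eq_zero bump_translate_vanishes[OF assms False]) auto
  then have "fdiff M (step \<nu>) F x = (-1) ^ M * F x"
    unfolding fdiff_def by (subst sum.remove[of _ 0]) auto
  then show ?thesis
    using F_eq_bump[OF False] by (simp add: abs_mult)
qed simp

lemma Lp_norm_bump:
  "Lp_norm p (bump \<nu>)
     = coeff (real CARD('n) / p) \<nu> * (\<integral>y. \<bar>\<psi> y\<bar> powr p \<partial>lborel) powr (1/p) * 2 powr (- real \<nu> * CARD('n) / p)"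
  unfolding Lp_norm_def integral_bump_powr[OF p_pos] using p_pos coeff_nonneg
  by (simp add: powr_mult powr_powr)

lemma modulus_lower_bound:
  assumes "real M \<le> 2^\<nu>"
  shows "(2 * radius) powr (-s) * (\<integral>y. \<bar>\<psi> y\<bar> powr p \<partial>lborel) powr (1/p) * coeff s \<nu>
           \<le> norm (step \<nu>) powr (-s) * Lp_norm p (fdiff M (step \<nu>) F)"
proof -
  let ?N = "real CARD('n)" and ?I = "(\<integral>y. \<bar>\<psi> y\<bar> powr p \<partial>lborel) powr (1/p)"
  have "norm (step \<nu>) powr (-s) = ((2 * radius) * 2 powr (- real \<nu>)) powr (-s)"
    by (simp add: norm_step powr_minus powr_realpow divide_inverse)
  also have "\<dots> = (2 * radius) powr (-s) * 2 powr (real \<nu> * s)"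
    using radius_ge_1 by (simp add: powr_mult powr_powr)
  finally have norm_step_powr: "norm (step \<nu>) powr (-s) = (2 * radius) powr (-s) * 2 powr (real \<nu> * s)" .
  have "2 powr (real \<nu> * s) * 2 powr (- real \<nu> * (s - ?N/p)) * 2 powr (- real \<nu> * ?N / p) = 1"
    by (simp add: powr_add[symmetric] algebra_simps)
  then have "2 powr (real \<nu> * s) * Lp_norm p (bump \<nu>) = ?I * coeff s \<nu>"
    unfolding Lp_norm_bump by (simp add: coeff_def mult_ac)
  then have "(2 * radius) powr (-s) * ?I * coeff s \<nu> = norm (step \<nu>) powr (-s) * Lp_norm p (bump \<nu>)"
    unfolding norm_step_powr by (simp add: mult_ac)
  also have "\<dots> \<le> norm (step \<nu>) powr (-s) * Lp_norm p (fdiff M (step \<nu>) F)"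
    using Lp_norm_mono[OF p_pos integrable_fdiff_powr[OF in_Lp_F p_pos] abs_bump_le_fdiff_F[OF assms]]
    by (simp add: mult_left_mono)
  finally show ?thesis .
qed

lemma coeff_s_unbounded:
  obtains \<nu> where "real M \<le> 2^\<nu>" and "X < coeff s \<nu>"
proof -
  define j where "j = M + nat \<lceil>(\<bar>X\<bar> + 1) powr q\<rceil>"
  define \<nu> :: nat where "\<nu> = 2^j"
  have "j < \<nu>" and "\<nu> < 2^\<nu>"
    unfolding \<nu>_def by (simp_all add: less_exp)
  moreover have "M \<le> j"
    by (simp add: j_def)
  ultimately have "real M < real (2^\<nu>)"
    by (simp only: of_nat_less_iff)
  then have "real M \<le> 2^\<nu>"
    by simp
  have "(\<bar>X\<bar> + 1) powr q < real \<nu>"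
    using \<open>j < \<nu>\<close> unfolding j_def by linarith
  then have "((\<bar>X\<bar> + 1) powr q) powr (1/q) < real \<nu> powr (1/q)"
    using q_pos by (intro powr_less_mono2) auto
  then have "\<bar>X\<bar> + 1 < coeff s \<nu>"
    using q_pos by (simp add: powr_powr coeff_def weight_def \<nu>_def)
  with \<open>real M \<le> 2^\<nu>\<close> show ?thesis
    using that by fastforce
qed

lemma not_besov_inf_F: "\<not> besov_inf s p F"
proof
  assume "besov_inf s p F"
  then obtain M :: nat
    where "bdd_above ((\<lambda>h. norm h powr (-s) * Lp_norm p (fdiff M h F)) ` (UNIV - {0}))"
    unfolding besov_inf_def by blast
  then obtain B where B: "\<And>h. h \<noteq> 0 \<Longrightarrow> norm h powr (-s) * Lp_norm p (fdiff M h F) \<le> B"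
    by (auto simp: bdd_above_def)
  define C where "C = (2 * radius) powr (-s) * (\<integral>y. \<bar>\<psi> y\<bar> powr p \<partial>lborel) powr (1/p)"
  have "C > 0"
    unfolding C_def using radius_ge_1 integral_psi_powr_pos[OF p_pos] by simp
  obtain \<nu> where "real M \<le> 2^\<nu>" and "B / C < coeff s \<nu>"
    using coeff_s_unbounded by blast
  then have "B < C * coeff s \<nu>"
    using \<open>C > 0\<close> by (simp add: field_simps)
  also have "\<dots> \<le> norm (step \<nu>) powr (-s) * Lp_norm p (fdiff M (step \<nu>) F)"
    using modulus_lower_bound[OF \<open>real M \<le> 2^\<nu>\<close>] by (simp add: C_def)
  also have "\<dots> \<le> B"
    using norm_step[of \<nu>] radius_ge_1 by (intro B) auto
  finally show False
    by simp
qed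

end

theorem theorem2p14:
  fixes \<psi> :: "real^'n::finite \<Rightarrow> real" and r0 \<rho> s p q :: real
  assumes "admissible_psi \<psi> r0" and "\<rho> > r0"
    and "s > 0" and "1 \<le> p" and "1 \<le> q"
  shows "\<exists>f :: real^'n \<Rightarrow> real. in_Lp p f \<and>
           (SUP r\<in>{0<..<s}. ennreal ((s - r) powr (1/q)) * quark_besov_norm \<psi> \<rho> r p q f) < \<infinity> \<and>
           \<not> besov_inf s p f"
proof -
  interpret lacunary_counterexample \<psi> r0 s p q
    using assms by unfold_locales simp_all
  have "(SUP r\<in>{0<..<s}. ennreal ((s - r) powr (1/q)) * quark_besov_norm \<psi> \<rho> r p q F)
      \<le> ennreal ((3 * (1 + s * q * ln 2) / (q * ln 2)) powr (1/q))"
    by (rule SUP_least, rule weighted_quark_besov_norm_le) auto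
  then have "(SUP r\<in>{0<..<s}. ennreal ((s - r) powr (1/q)) * quark_besov_norm \<psi> \<rho> r p q F) < \<infinity>"
    by (rule order.strict_trans1) simp
  then show ?thesis
    using in_Lp_F not_besov_inf_F by blast
qed

end
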